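(* Let $L>0$, $N\ge 1$, let $v_\textup{d}>0$ be a constant, and let $K:\mathbb{R}\to\mathbb{R}$ satisfy the following: the support of $K$ is $[0,R]$ with $0<R<L$; $K\in C^2(0,R)$ with $K,K''\in L^\infty(0,R)$; $K(z)>0$ and $K'(z)<0$ for $z\in(0,R)$; $K(0)=K(R)=0$ and $K(0^+):=\lim_{z\to0^+}K(z)>0$. Consider $N$ pedestrians on the periodic domain $[0,L)$ (positions taken modulo $L$) with positions $X^1_t,\dots,X^N_t$ evolving by \[ \dot X^i_t=v_\textup{d}-\sum_{j=1}^N K(X^j_t-X^i_t),\qquad i=1,\dots,N, \] where each difference $X^j_t-X^i_t$ is taken modulo $L$ in $[0,L)$. Let $\bar X^1<\dots<\bar X^N$ (modulo $L$) be an equispaced lattice, i.e. $|\bar X^j-\bar X^i|=(j-i)L/N$, and set $X^i_t=\bar X^i+wt$. Then this translating equispaced lattice is a stable solution of the system (with respect to small perturbations of the positions, in the linearized sense) for \[ w=v_\textup{d}-\sum_{h=1}^{N-1}K\!\left(h\frac{L}{N}\right). \] Moreover, if $R>L/N$, it is also attractive (small perturbations, modulo rigid translations of the whole lattice, decay to zero).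
   Context: The lattice configuration corresponds to the discrete measure $\epsilon_t=\sum_{i=1}^N\delta_{X^i_t}$, which is a translation $\epsilon_t(x)=\bar\epsilon(x-wt)$ of the equispaced configuration. *)

theory Defs
  imports "HOL-Analysis.Analysis"
begin

definition pmod :: "real \<Rightarrow> real \<Rightarrow> real" where
  "pmod x L = x - L * of_int \<lfloor>x / L\<rfloor>"

text \<open>Derivative of K used in the linearization: K' on the open interval (0,R),
  and 0 elsewhere (K vanishes identically on (R,L); at the points 0 and R K need not
  be differentiable).\<close>
definition lin_coef :: "(real \<Rightarrow> real) \<Rightarrow> real \<Rightarrow> real \<Rightarrow> real" where
  "lin_coef K R z = (if 0 < z \<and> z < R then deriv K z else 0)"

definition lin_sol ::
  "(real \<Rightarrow> real) \<Rightarrow> real \<Rightarrow> real \<Rightarrow> nat \<Rightarrow> (nat \<Rightarrow> real) \<Rightarrow> (real \<Rightarrow> nat \<Rightarrow> real) \<Rightarrow> bool" where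
  "lin_sol K R L N Xbar y \<longleftrightarrow>
     (\<forall>t\<ge>0. \<forall>i<N. ((\<lambda>s. y s i) has_real_derivative
        (- (\<Sum>j<N. lin_coef K R (pmod (Xbar j - Xbar i) L) * (y t j - y t i))))
        (at t within {0..}))"

definition lin_stable ::
  "(real \<Rightarrow> real) \<Rightarrow> real \<Rightarrow> real \<Rightarrow> nat \<Rightarrow> (nat \<Rightarrow> real) \<Rightarrow> bool" where
  "lin_stable K R L N Xbar \<longleftrightarrow>
     (\<forall>\<epsilon>>0. \<exists>\<delta>>0. \<forall>y. lin_sol K R L N Xbar y \<and> (\<forall>i<N. \<bar>y 0 i\<bar> < \<delta>)
        \<longrightarrow> (\<forall>t\<ge>0. \<forall>i<N. \<bar>y t i\<bar> < \<epsilon>))"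

definition lin_attractive ::
  "(real \<Rightarrow> real) \<Rightarrow> real \<Rightarrow> real \<Rightarrow> nat \<Rightarrow> (nat \<Rightarrow> real) \<Rightarrow> bool" where
  "lin_attractive K R L N Xbar \<longleftrightarrow>
     (\<forall>y. lin_sol K R L N Xbar y \<longrightarrow>
        (\<exists>c. \<forall>i<N. ((\<lambda>t. y t i) \<longlongrightarrow> c) at_top))"

end

theory Submission
  imports Defs
begin

text \<open>Linearizing around the lattice gives the consensus system
  \<open>y\<^sub>i' = \<Sum>\<^sub>j c\<^sub>i\<^sub>j (y\<^sub>j - y\<^sub>i)\<close> with circulant weights
  \<open>c\<^sub>i\<^sub>j = -K'(((j - i) mod N) L/N) \<ge> 0\<close>, so every row and every column has the same sum.
  For such balanced nonnegative weights the energy \<open>\<Sum> y\<^sub>i\<^sup>2\<close> is nonincreasing, which gives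
  stability, and the mean of the \<open>y\<^sub>i\<close> is conserved. If \<open>R > L/N\<close> the nearest-neighbour weight
  \<open>-K'(L/N)\<close> is positive, and a discrete Poincare inequality on the cycle bounds the energy of the
  deviation from the mean by its dissipation; that deviation therefore decays exponentially, and
  every perturbation converges to a rigid translation of the lattice.\<close>

lemma antimono_on_nonneg_if_deriv_nonpos:
  fixes f f' :: "real \<Rightarrow> real"
  assumes deriv: "\<And>t. t \<ge> 0 \<Longrightarrow> (f has_real_derivative f' t) (at t within {0..})"
    and nonpos: "\<And>t. t \<ge> 0 \<Longrightarrow> f' t \<le> 0" and "0 \<le> s" "s \<le> t"
  shows "f t \<le> f s"
proof (rule DERIV_nonpos_imp_decreasing_open[OF \<open>s \<le> t\<close>])
  fix x assume x: "s < x" "x < t"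
  then have "at x within {0..} = at x"
    using \<open>0 \<le> s\<close> by (intro at_within_interior) auto
  then show "\<exists>y. DERIV f x :> y \<and> y \<le> 0"
    using deriv[of x] nonpos[of x] x \<open>0 \<le> s\<close> by auto
next
  have "continuous_on {0..} f"
    using deriv by (meson DERIV_continuous atLeast_iff continuous_on_eq_continuous_within)
  then show "continuous_on {s..t} f"
    by (rule continuous_on_subset) (use \<open>0 \<le> s\<close> in auto)
qed

lemma exp_decay_if_deriv_le:
  fixes W W' :: "real \<Rightarrow> real"
  assumes deriv: "\<And>t. t \<ge> 0 \<Longrightarrow> (W has_real_derivative W' t) (at t within {0..})"
    and le: "\<And>t. t \<ge> 0 \<Longrightarrow> W' t \<le> - a * W t" and "t \<ge> 0"
  shows "W t \<le> W 0 * exp (- a * t)"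
proof -
  have "W t * exp (a * t) \<le> W 0 * exp (a * 0)"
  proof (rule antimono_on_nonneg_if_deriv_nonpos[where f = "\<lambda>s. W s * exp (a * s)"])
    show "((\<lambda>s. W s * exp (a * s)) has_real_derivative
        W' s * exp (a * s) + W s * (a * exp (a * s))) (at s within {0..})" if "s \<ge> 0" for s
      using deriv[OF that] by (auto intro!: derivative_eq_intros)
    show "W' s * exp (a * s) + W s * (a * exp (a * s)) \<le> 0" if "s \<ge> 0" for s
    proof -
      have "(W' s + a * W s) * exp (a * s) \<le> 0"
        using le[OF that] by (simp add: mult_nonpos_nonneg)
      then show ?thesis by (simp add: algebra_simps)
    qed
  qed (use \<open>t \<ge> 0\<close> in auto)
  then have "W t * exp (a * t) * exp (- a * t) \<le> W 0 * exp (- a * t)"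
    by (simp add: mult_right_mono)
  then show ?thesis
    by (simp add: mult.assoc flip: exp_add)
qed

lemma tendsto_0_if_square_le_exp_decay:
  fixes f :: "real \<Rightarrow> real"
  assumes "\<And>t. t \<ge> 0 \<Longrightarrow> (f t)^2 \<le> C * exp (- a * t)" and "a > 0"
  shows "(f \<longlongrightarrow> 0) at_top"
proof (rule Lim_null_comparison)
  show "\<forall>\<^sub>F t in at_top. norm (f t) \<le> sqrt (C * exp (- a * t))"
    using eventually_ge_at_top[of 0] by eventually_elim (use assms(1) in \<open>simp add: real_le_rsqrt\<close>)
  have "filterlim (\<lambda>t. a * t) at_top at_top"
    by (rule filterlim_tendsto_pos_mult_at_top[OF tendsto_const \<open>a > 0\<close> filterlim_ident])
  then have "((\<lambda>t. exp (- (a * t))) \<longlongrightarrow> 0) at_top"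
    by (intro filterlim_compose[OF exp_at_bot]) (simp add: filterlim_uminus_at_top)
  then have "((\<lambda>t. sqrt (C * exp (- a * t))) \<longlongrightarrow> sqrt (C * 0)) at_top"
    by (intro tendsto_real_sqrt tendsto_mult tendsto_const) simp
  then show "((\<lambda>t. sqrt (C * exp (- a * t))) \<longlongrightarrow> 0) at_top"
    by simp
qed

section \<open>Linear consensus systems with balanced weights\<close>

definition balanced :: "nat \<Rightarrow> (nat \<Rightarrow> nat \<Rightarrow> real) \<Rightarrow> bool" where
  "balanced N c \<longleftrightarrow> (\<exists>S. (\<forall>i<N. (\<Sum>j<N. c i j) = S) \<and> (\<forall>j<N. (\<Sum>i<N. c i j) = S))"

definition consensus_sol :: "nat \<Rightarrow> (nat \<Rightarrow> nat \<Rightarrow> real) \<Rightarrow> (real \<Rightarrow> nat \<Rightarrow> real) \<Rightarrow> bool" where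
  "consensus_sol N c y \<longleftrightarrow>
     (\<forall>t\<ge>0. \<forall>i<N. ((\<lambda>s. y s i) has_real_derivative (\<Sum>j<N. c i j * (y t j - y t i)))
        (at t within {0..}))"

lemma balanced_sum_swap:
  assumes "balanced N c"
  shows "(\<Sum>i<N. \<Sum>j<N. c i j * f j) = (\<Sum>i<N. \<Sum>j<N. c i j * f i)"
proof -
  obtain S where row: "\<forall>i<N. (\<Sum>j<N. c i j) = S" and col: "\<forall>j<N. (\<Sum>i<N. c i j) = S"
    using assms unfolding balanced_def by blast
  have "(\<Sum>i<N. \<Sum>j<N. c i j * f j) = (\<Sum>j<N. (\<Sum>i<N. c i j) * f j)"
    by (subst sum.swap) (simp add: sum_distrib_right)
  also have "\<dots> = (\<Sum>i<N. (\<Sum>j<N. c i j) * f i)"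
    using row col by simp
  also have "\<dots> = (\<Sum>i<N. \<Sum>j<N. c i j * f i)"
    by (simp add: sum_distrib_right)
  finally show ?thesis .
qed

lemma balanced_sum_diff_eq_0:
  assumes "balanced N c"
  shows "(\<Sum>i<N. \<Sum>j<N. c i j * (x j - x i)) = 0"
  using balanced_sum_swap[OF assms, of x] by (simp add: right_diff_distrib sum_subtractf)

lemma balanced_quadratic_form:
  assumes "balanced N c"
  shows "(\<Sum>i<N. 2 * x i * (\<Sum>j<N. c i j * (x j - x i)))
       = - (\<Sum>i<N. \<Sum>j<N. c i j * (x j - x i)^2)"
proof -
  have "(\<Sum>i<N. 2 * x i * (\<Sum>j<N. c i j * (x j - x i))) + (\<Sum>i<N. \<Sum>j<N. c i j * (x j - x i)^2)
      = (\<Sum>i<N. \<Sum>j<N. c i j * (x j)^2 - c i j * (x i)^2)"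
    by (simp add: sum_distrib_left flip: sum.distrib)
       (simp add: power2_eq_square algebra_simps)
  also have "\<dots> = 0"
    using balanced_sum_swap[OF assms, of "\<lambda>i. (x i)^2"] by (simp add: sum_subtractf)
  finally show ?thesis by linarith
qed

lemma consensus_sum_const:
  assumes "balanced N c" "consensus_sol N c y" "t \<ge> 0"
  shows "(\<Sum>i<N. y t i) = (\<Sum>i<N. y 0 i)"
proof -
  have "((\<lambda>s. \<Sum>i<N. y s i) has_field_derivative 0) (at s within {0..})" if "s \<in> {0..}" for s
  proof -
    have "((\<lambda>s. \<Sum>i<N. y s i) has_real_derivative (\<Sum>i<N. \<Sum>j<N. c i j * (y s j - y s i)))
        (at s within {0..})"
      using assms(2) that unfolding consensus_sol_def by (intro DERIV_sum) auto
    then show ?thesis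
      using balanced_sum_diff_eq_0[OF assms(1)] by simp
  qed
  then obtain m where "\<forall>s\<in>{0..}. (\<Sum>i<N. y s i) = m"
    using has_field_derivative_zero_constant[of "{0::real..}"] by blast
  then show ?thesis
    using \<open>t \<ge> 0\<close> by simp
qed

lemma consensus_energy_deriv:
  assumes "balanced N c" "consensus_sol N c y" "t \<ge> 0"
  shows "((\<lambda>s. \<Sum>i<N. (y s i)^2) has_real_derivative
           - (\<Sum>i<N. \<Sum>j<N. c i j * (y t j - y t i)^2)) (at t within {0..})"
proof -
  have "((\<lambda>s. \<Sum>i<N. (y s i)^2) has_real_derivative
      (\<Sum>i<N. 2 * y t i * (\<Sum>j<N. c i j * (y t j - y t i)))) (at t within {0..})"
    using assms(2,3) unfolding consensus_sol_def
    by (intro DERIV_sum) (auto intro!: derivative_eq_intros)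
  then show ?thesis
    using balanced_quadratic_form[OF assms(1)] by simp
qed

lemma consensus_energy_le:
  assumes "balanced N c" "\<And>i j. i < N \<Longrightarrow> j < N \<Longrightarrow> 0 \<le> c i j"
    and "consensus_sol N c y" "t \<ge> 0"
  shows "(\<Sum>i<N. (y t i)^2) \<le> (\<Sum>i<N. (y 0 i)^2)"
proof (rule antimono_on_nonneg_if_deriv_nonpos[where f = "\<lambda>s. \<Sum>i<N. (y s i)^2"])
  show "((\<lambda>s. \<Sum>i<N. (y s i)^2) has_real_derivative
      - (\<Sum>i<N. \<Sum>j<N. c i j * (y s j - y s i)^2)) (at s within {0..})" if "s \<ge> 0" for s
    using consensus_energy_deriv[OF assms(1,3) that] .
  show "- (\<Sum>i<N. \<Sum>j<N. c i j * (y s j - y s i)^2) \<le> 0" for s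
    using assms(2) by (auto intro!: sum_nonneg)
qed (use assms(4) in auto)

lemma consensus_stable:
  assumes "balanced N c" "\<And>i j. i < N \<Longrightarrow> j < N \<Longrightarrow> 0 \<le> c i j" and "\<epsilon> > 0"
  shows "\<exists>\<delta>>0. \<forall>y. consensus_sol N c y \<and> (\<forall>i<N. \<bar>y 0 i\<bar> < \<delta>)
           \<longrightarrow> (\<forall>t\<ge>0. \<forall>i<N. \<bar>y t i\<bar> < \<epsilon>)"
proof (intro exI[of _ "\<epsilon> / (real N + 1)"] conjI allI impI)
  show "\<epsilon> / (real N + 1) > 0"
    using \<open>\<epsilon> > 0\<close> by simp
  fix y :: "real \<Rightarrow> nat \<Rightarrow> real" and t :: real and i :: nat
  assume y: "consensus_sol N c y \<and> (\<forall>i<N. \<bar>y 0 i\<bar> < \<epsilon> / (real N + 1))"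
    and "t \<ge> 0" "i < N"
  have "(y t i)^2 \<le> (\<Sum>i<N. (y t i)^2)"
    using \<open>i < N\<close> by (intro member_le_sum) auto
  also have "\<dots> \<le> (\<Sum>i<N. (y 0 i)^2)"
    using consensus_energy_le[OF assms(1,2)] y \<open>t \<ge> 0\<close> by blast
  also have "\<dots> \<le> (\<Sum>i<N. (\<epsilon> / (real N + 1))^2)"
  proof (rule sum_mono)
    fix j assume "j \<in> {..<N}"
    then have "\<bar>y 0 j\<bar> \<le> \<epsilon> / (real N + 1)"
      using y by (simp add: less_imp_le)
    then show "(y 0 j)^2 \<le> (\<epsilon> / (real N + 1))^2"
      using power_mono[of "\<bar>y 0 j\<bar>" _ 2] by simp
  qed
  also have "\<dots> = \<epsilon>^2 * (real N / (real N + 1)^2)"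
    by (simp add: power_divide)
  also have "\<dots> < \<epsilon>^2 * 1"
  proof (intro mult_strict_left_mono)
    have "real N < (real N + 1)^2"
      by (simp add: power2_eq_square algebra_simps add_pos_nonneg)
    then show "real N / (real N + 1)^2 < 1"
      by simp
  qed (use \<open>\<epsilon> > 0\<close> in simp)
  finally show "\<bar>y t i\<bar> < \<epsilon>"
    using \<open>\<epsilon> > 0\<close> by (simp add: abs_less_iff power2_less_imp_less)
qed

section \<open>Poincare inequality on the cycle and convergence to consensus\<close>

lemma cycle_diff_le_total_variation:
  fixes z :: "nat \<Rightarrow> real"
  assumes "i < N" "k < N"
  shows "\<bar>z i - z k\<bar> \<le> (\<Sum>l<N. \<bar>z (Suc l mod N) - z l\<bar>)"
proof -
  have ordered: "\<bar>z i - z k\<bar> \<le> (\<Sum>l<N. \<bar>z (Suc l mod N) - z l\<bar>)" if "k \<le> i" "i < N" for i k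
  proof -
    have "z i - z k = (\<Sum>l=k..<i. z (Suc l) - z l)"
      using sum_Suc_diff'[OF \<open>k \<le> i\<close>, of z] by simp
    also have "\<dots> = (\<Sum>l=k..<i. z (Suc l mod N) - z l)"
      using that by (intro sum.cong) auto
    finally have "\<bar>z i - z k\<bar> \<le> (\<Sum>l=k..<i. \<bar>z (Suc l mod N) - z l\<bar>)"
      by (metis sum_abs)
    also have "\<dots> \<le> (\<Sum>l<N. \<bar>z (Suc l mod N) - z l\<bar>)"
      using that by (intro sum_mono2) auto
    finally show ?thesis .
  qed
  show ?thesis
    using ordered[of k i] ordered[of i k] assms by (cases "k \<le> i") (auto simp: abs_minus_commute)
qed

lemma discrete_poincare_cycle:
  fixes z :: "nat \<Rightarrow> real"
  assumes "N \<ge> 1" and mean_zero: "(\<Sum>i<N. z i) = 0"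
  shows "(\<Sum>i<N. (z i)^2) \<le> real N ^ 2 * (\<Sum>i<N. (z (Suc i mod N) - z i)^2)"
proof -
  define T where "T = (\<Sum>l<N. \<bar>z (Suc l mod N) - z l\<bar>)"
  have z_le_T: "\<bar>z i\<bar> \<le> T" if "i < N" for i
  proof -
    have "real N * \<bar>z i\<bar> = \<bar>\<Sum>k<N. z i - z k\<bar>"
      using mean_zero by (simp add: sum_subtractf abs_mult)
    also have "\<dots> \<le> (\<Sum>k<N. \<bar>z i - z k\<bar>)"
      by (rule sum_abs)
    also have "\<dots> \<le> real N * T"
      using sum_mono[of "{..<N}" "\<lambda>k. \<bar>z i - z k\<bar>" "\<lambda>_. T"] cycle_diff_le_total_variation that
      unfolding T_def by auto
    finally show ?thesis
      using \<open>N \<ge> 1\<close> by simp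
  qed
  have "(\<Sum>i<N. (z i)^2) \<le> (\<Sum>i<N. T^2)"
    using z_le_T by (intro sum_mono) (metis abs_ge_zero lessThan_iff power2_abs power_mono)
  also have "\<dots> = real N * T^2"
    by simp
  also have "\<dots> \<le> real N * (real N * (\<Sum>i<N. (z (Suc i mod N) - z i)^2))"
    using sum_squared_le_sum_of_squares[of "\<lambda>l. \<bar>z (Suc l mod N) - z l\<bar>" "{..<N}"]
    unfolding T_def by (intro mult_left_mono) (simp_all add: mult.commute)
  finally show ?thesis
    by (simp add: power2_eq_square mult.assoc)
qed

lemma cycle_dissipation_lower_bound:
  assumes "N \<ge> 1" "\<And>i j. i < N \<Longrightarrow> j < N \<Longrightarrow> 0 \<le> c i j"
    and "0 \<le> b" "\<And>i. i < N \<Longrightarrow> b \<le> c i (Suc i mod N)" and "(\<Sum>i<N. x i) = 0"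
  shows "b * (\<Sum>i<N. (x i)^2) \<le> real N ^ 2 * (\<Sum>i<N. \<Sum>j<N. c i j * (x j - x i)^2)"
proof -
  have "b * (\<Sum>i<N. (x i)^2) \<le> real N ^ 2 * (\<Sum>i<N. b * (x (Suc i mod N) - x i)^2)"
    using mult_left_mono[OF discrete_poincare_cycle[OF assms(1,5)] \<open>0 \<le> b\<close>]
    by (simp add: sum_distrib_left mult.left_commute)
  also have "\<dots> \<le> real N ^ 2 * (\<Sum>i<N. \<Sum>j<N. c i j * (x j - x i)^2)"
  proof (intro mult_left_mono sum_mono)
    fix i assume "i \<in> {..<N}"
    then have "b * (x (Suc i mod N) - x i)^2 \<le> c i (Suc i mod N) * (x (Suc i mod N) - x i)^2"
      using assms(4) by (simp add: mult_right_mono)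
    also have "\<dots> \<le> (\<Sum>j<N. c i j * (x j - x i)^2)"
      using \<open>i \<in> {..<N}\<close> \<open>N \<ge> 1\<close> assms(2)
      by (intro member_le_sum[where f = "\<lambda>j. c i j * (x j - x i)^2"]) auto
    finally show "b * (x (Suc i mod N) - x i)^2 \<le> (\<Sum>j<N. c i j * (x j - x i)^2)" .
  qed simp
  finally show ?thesis .
qed

lemma consensus_sol_diff_const:
  assumes "consensus_sol N c y"
  shows "consensus_sol N c (\<lambda>t i. y t i - \<mu>)"
  using assms unfolding consensus_sol_def by (auto intro!: derivative_eq_intros)

lemma consensus_converges_to_mean:
  assumes "balanced N c" "\<And>i j. i < N \<Longrightarrow> j < N \<Longrightarrow> 0 \<le> c i j"
    and "b > 0" "\<And>i. i < N \<Longrightarrow> b \<le> c i (Suc i mod N)"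
    and "consensus_sol N c y" "i < N"
  shows "((\<lambda>t. y t i) \<longlongrightarrow> (\<Sum>k<N. y 0 k) / real N) at_top"
proof -
  have "N \<ge> 1"
    using \<open>i < N\<close> by simp
  define z where "z t k = y t k - (\<Sum>k<N. y 0 k) / real N" for t k
  have z_sol: "consensus_sol N c z"
    unfolding z_def by (rule consensus_sol_diff_const[OF assms(5)])
  have z_mean: "(\<Sum>k<N. z t k) = 0" if "t \<ge> 0" for t
    using consensus_sum_const[OF assms(1,5) that] \<open>N \<ge> 1\<close> unfolding z_def by (simp add: sum_subtractf)
  define a where "a = b / real N ^ 2"
  have "a > 0"
    using \<open>b > 0\<close> \<open>N \<ge> 1\<close> unfolding a_def by simp
  have decay: "(\<Sum>k<N. (z t k)^2) \<le> (\<Sum>k<N. (z 0 k)^2) * exp (- a * t)" if "t \<ge> 0" for t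
  proof (rule exp_decay_if_deriv_le[OF consensus_energy_deriv[OF assms(1) z_sol] _ that])
    fix s :: real assume "s \<ge> 0"
    have "b * (\<Sum>k<N. (z s k)^2) \<le> real N ^ 2 * (\<Sum>i<N. \<Sum>j<N. c i j * (z s j - z s i)^2)"
      using \<open>b > 0\<close> by (intro cycle_dissipation_lower_bound[OF \<open>N \<ge> 1\<close>] assms z_mean \<open>s \<ge> 0\<close>) auto
    then have "a * (\<Sum>k<N. (z s k)^2) \<le> (\<Sum>i<N. \<Sum>j<N. c i j * (z s j - z s i)^2)"
      using \<open>N \<ge> 1\<close> unfolding a_def by (simp add: pos_divide_le_eq mult.commute)
    then show "- (\<Sum>i<N. \<Sum>j<N. c i j * (z s j - z s i)^2) \<le> - a * (\<Sum>k<N. (z s k)^2)"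
      by simp
  qed
  have "((\<lambda>t. z t i) \<longlongrightarrow> 0) at_top"
  proof (rule tendsto_0_if_square_le_exp_decay[OF _ \<open>a > 0\<close>])
    fix t :: real assume "t \<ge> 0"
    have "(z t i)^2 \<le> (\<Sum>k<N. (z t k)^2)"
      using \<open>i < N\<close> by (intro member_le_sum) auto
    then show "(z t i)^2 \<le> (\<Sum>k<N. (z 0 k)^2) * exp (- a * t)"
      using decay[OF \<open>t \<ge> 0\<close>] by linarith
  qed
  then show ?thesis
    unfolding z_def by (simp add: LIM_zero_iff)
qed

lemma pmod_lattice_point:
  fixes L :: real and a :: int
  assumes "L > 0" "N \<ge> 1"
  shows "pmod (real_of_int a * L / real N) L = real_of_int (a mod int N) * L / real N"
proof -
  have "real_of_int a * L / real N / L = real_of_int a / real_of_int (int N)"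
    using \<open>L > 0\<close> by simp
  then have floor_eq: "\<lfloor>real_of_int a * L / real N / L\<rfloor> = a div int N"
    by (simp only: floor_divide_of_int_eq)
  have "real_of_int a = real_of_int (int N) * real_of_int (a div int N) + real_of_int (a mod int N)"
    by (metis div_mult_mod_eq mult.commute of_int_add of_int_mult)
  then show ?thesis
    unfolding pmod_def floor_eq using \<open>N \<ge> 1\<close> by (subst (1) \<open>real_of_int a = _\<close>) (simp add: field_simps)
qed

definition lattice_gap :: "nat \<Rightarrow> nat \<Rightarrow> nat \<Rightarrow> nat" where
  "lattice_gap N i j = nat ((int j - int i) mod int N)"

lemma lattice_pmod_diff:
  assumes "L > 0" "N \<ge> 1" "\<forall>i<N. Xbar i = Xbar 0 + real i * L / real N" "i < N" "j < N"
  shows "pmod (Xbar j - Xbar i) L = real (lattice_gap N i j) * L / real N"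
proof -
  have "Xbar j - Xbar i = (real j - real i) * L / real N"
    using assms(3)[rule_format, OF \<open>i < N\<close>] assms(3)[rule_format, OF \<open>j < N\<close>]
    by (simp add: diff_divide_distrib left_diff_distrib)
  then have "Xbar j - Xbar i = real_of_int (int j - int i) * L / real N"
    by simp
  then show ?thesis
    using pmod_lattice_point[OF assms(1,2), of "int j - int i"] \<open>N \<ge> 1\<close>
    unfolding lattice_gap_def by simp
qed

lemma bij_betw_lessThan_mod:
  fixes f :: "nat \<Rightarrow> int"
  assumes "\<And>x y. x < N \<Longrightarrow> y < N \<Longrightarrow> f x mod int N = f y mod int N \<Longrightarrow> x = y"
  shows "bij_betw (\<lambda>k. nat (f k mod int N)) {..<N} {..<N}"
proof -
  have into: "(\<lambda>k. nat (f k mod int N)) ` {..<N} \<subseteq> {..<N}"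
    by (auto simp: nat_less_iff)
  have "inj_on (\<lambda>k. nat (f k mod int N)) {..<N}"
  proof (rule inj_onI)
    fix x y assume "x \<in> {..<N}" "y \<in> {..<N}" and "nat (f x mod int N) = nat (f y mod int N)"
    then have "f x mod int N = f y mod int N"
      by (simp add: eq_nat_nat_iff)
    then show "x = y"
      using assms \<open>x \<in> {..<N}\<close> \<open>y \<in> {..<N}\<close> by blast
  qed
  then show ?thesis
    unfolding bij_betw_def using endo_inj_surj[OF _ into] by simp
qed

lemma sum_lattice_gap_row:
  assumes "i < N"
  shows "(\<Sum>j<N. g (lattice_gap N i j)) = (\<Sum>h<N. g h)"
proof -
  have "bij_betw (lattice_gap N i) {..<N} {..<N}"
    unfolding lattice_gap_def
  proof (rule bij_betw_lessThan_mod)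
    fix x y assume "x < N" "y < N" and h: "(int x - int i) mod int N = (int y - int i) mod int N"
    have "(int x - int i + int i) mod int N = (int y - int i + int i) mod int N"
      by (rule mod_add_cong[OF h refl])
    then show "x = y"
      using \<open>x < N\<close> \<open>y < N\<close> by simp
  qed
  then show ?thesis
    by (rule sum.reindex_bij_betw)
qed

lemma sum_lattice_gap_col:
  assumes "j < N"
  shows "(\<Sum>i<N. g (lattice_gap N i j)) = (\<Sum>h<N. g h)"
proof -
  have "bij_betw (\<lambda>i. lattice_gap N i j) {..<N} {..<N}"
    unfolding lattice_gap_def
  proof (rule bij_betw_lessThan_mod)
    fix x y assume "x < N" "y < N" and h: "(int j - int x) mod int N = (int j - int y) mod int N"
    have "(int j - (int j - int x)) mod int N = (int j - (int j - int y)) mod int N"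
      by (rule mod_diff_cong[OF refl h])
    then show "x = y"
      using \<open>x < N\<close> \<open>y < N\<close> by simp
  qed
  then show ?thesis
    by (rule sum.reindex_bij_betw)
qed

lemma balanced_lattice_weights: "balanced N (\<lambda>i j. g (lattice_gap N i j))"
  unfolding balanced_def using sum_lattice_gap_row sum_lattice_gap_col by blast

lemma lattice_gap_Suc_mod:
  assumes "N \<ge> 2" "i < N"
  shows "lattice_gap N i (Suc i mod N) = 1"
proof -
  have "(int (Suc i mod N) - int i) mod int N = (int i + 1 - int i) mod int N"
    by (simp add: of_nat_mod mod_diff_left_eq)
  then show ?thesis
    unfolding lattice_gap_def using \<open>N \<ge> 2\<close> by simp
qed

lemma translating_lattice_velocity:
  assumes "L > 0" "N \<ge> 1" "K 0 = 0"
    and lattice: "\<forall>i<N. Xbar i = Xbar 0 + real i * L / real N"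
    and "w = vd - (\<Sum>h=1..N-1. K (real h * L / real N))" and "i < N"
  shows "vd - (\<Sum>j<N. K (pmod ((Xbar j + w * t) - (Xbar i + w * t)) L)) = w"
proof -
  have "(\<Sum>j<N. K (pmod ((Xbar j + w * t) - (Xbar i + w * t)) L))
      = (\<Sum>j<N. K (real (lattice_gap N i j) * L / real N))"
    using lattice_pmod_diff[OF assms(1,2) lattice \<open>i < N\<close>] by (intro sum.cong) auto
  also have "\<dots> = (\<Sum>h<N. K (real h * L / real N))"
    using sum_lattice_gap_row[OF \<open>i < N\<close>] .
  also have "\<dots> = (\<Sum>h=1..N-1. K (real h * L / real N))"
  proof -
    have "{..<N} = insert 0 {1..N-1}"
      using \<open>N \<ge> 1\<close> by auto
    then show ?thesis
      using \<open>K 0 = 0\<close> by simp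
  qed
  finally show ?thesis
    using assms(5) by simp
qed

lemma lin_sol_imp_consensus_sol:
  assumes "L > 0" "N \<ge> 1" "\<forall>i<N. Xbar i = Xbar 0 + real i * L / real N"
    and "lin_sol K R L N Xbar y"
  shows "consensus_sol N (\<lambda>i j. - lin_coef K R (real (lattice_gap N i j) * L / real N)) y"
  unfolding consensus_sol_def
proof (intro allI impI)
  fix t :: real and i assume "t \<ge> 0" "i < N"
  have "- (\<Sum>j<N. lin_coef K R (pmod (Xbar j - Xbar i) L) * (y t j - y t i))
      = (\<Sum>j<N. - lin_coef K R (real (lattice_gap N i j) * L / real N) * (y t j - y t i))"
    using lattice_pmod_diff[OF assms(1-3) \<open>i < N\<close>] unfolding sum_negf[symmetric]
    by (intro sum.cong) auto
  then show "((\<lambda>s. y s i) has_real_derivative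
      (\<Sum>j<N. - lin_coef K R (real (lattice_gap N i j) * L / real N) * (y t j - y t i))) (at t within {0..})"
    using assms(4) \<open>t \<ge> 0\<close> \<open>i < N\<close> unfolding lin_sol_def by metis
qed

text \<open>Only the sign of \<open>K'\<close> and \<open>K(0) = 0\<close> enter the linearized statement.\<close>
theorem mainTheorem1:
  fixes K :: "real \<Rightarrow> real" and L R vd w :: real and N :: nat and Xbar :: "nat \<Rightarrow> real"
  assumes L_pos: "L > 0" and N_pos: "N \<ge> 1" and vd_pos: "vd > 0"
    and R_bounds: "0 < R" "R < L"
    and supp: "closure {z. K z \<noteq> 0} = {0..R}"
    and C2: "\<forall>z\<in>{0<..<R}. K field_differentiable (at z) \<and> deriv K field_differentiable (at z)"
    and C2_cont: "continuous_on {0<..<R} (deriv (deriv K))"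
    and bdd: "\<exists>M. \<forall>z\<in>{0<..<R}. \<bar>K z\<bar> \<le> M \<and> \<bar>deriv (deriv K) z\<bar> \<le> M"
    and K_pos: "\<forall>z\<in>{0<..<R}. K z > 0"
    and K'_neg: "\<forall>z\<in>{0<..<R}. deriv K z < 0"
    and K_ends: "K 0 = 0" "K R = 0"
    and K_0plus: "\<exists>l>0. (K \<longlongrightarrow> l) (at_right 0)"
    and lattice: "\<forall>i<N. Xbar i = Xbar 0 + real i * L / real N"
    and w_def: "w = vd - (\<Sum>h=1..N-1. K (real h * L / real N))"
  shows "(\<forall>i<N. \<forall>t. ((\<lambda>s. Xbar i + w * s) has_real_derivative
              (vd - (\<Sum>j<N. K (pmod ((Xbar j + w * t) - (Xbar i + w * t)) L)))) (at t))
         \<and> lin_stable K R L N Xbar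
         \<and> (R > L / real N \<longrightarrow> lin_attractive K R L N Xbar)"
proof (intro conjI allI impI)
  fix i t assume "i < N"
  show "((\<lambda>s. Xbar i + w * s) has_real_derivative
      (vd - (\<Sum>j<N. K (pmod ((Xbar j + w * t) - (Xbar i + w * t)) L)))) (at t)"
    unfolding translating_lattice_velocity[OF L_pos N_pos K_ends(1) lattice w_def \<open>i < N\<close>]
    by (auto intro!: derivative_eq_intros)
next
  define c where "c i j = - lin_coef K R (real (lattice_gap N i j) * L / real N)" for i j
  have balanced: "balanced N c"
    unfolding c_def by (rule balanced_lattice_weights)
  have nonneg: "0 \<le> c i j" for i j
    using K'_neg unfolding c_def lin_coef_def by (auto simp: less_imp_le)
  have sol: "consensus_sol N c y" if "lin_sol K R L N Xbar y" for y
    unfolding c_def using lin_sol_imp_consensus_sol[OF L_pos N_pos lattice that] .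
  show "lin_stable K R L N Xbar"
    unfolding lin_stable_def using consensus_stable[OF balanced nonneg] sol by meson
  assume "R > L / real N"
  then have "N \<ge> 2"
    using R_bounds N_pos by (cases "N = 1") auto
  have "c i (Suc i mod N) = - lin_coef K R (L / real N)" if "i < N" for i
    unfolding c_def lattice_gap_Suc_mod[OF \<open>N \<ge> 2\<close> that] by simp
  moreover have "- lin_coef K R (L / real N) > 0"
    using K'_neg \<open>R > L / real N\<close> L_pos N_pos unfolding lin_coef_def by auto
  ultimately show "lin_attractive K R L N Xbar"
    unfolding lin_attractive_def using consensus_converges_to_mean[OF balanced nonneg] sol
    by (metis order.refl)
qed

end
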